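(* Consider the queueing system in the context under the MaxWeight policy with a diagonal matrix $\Delta$ with positive diagonal entries, in overload ($\rho\notin\mathcal{P}$). Let $H=\limsup_{t\to\infty}\langle \frac{X(t)}{t},\Delta\frac{X(t)}{t}\rangle$, and let $\{t_c\}$ be an increasing unbounded sequence with $\lim_{c\to\infty}X(t_c)/t_c=\eta$ and $\langle\eta,\Delta\eta\rangle=H$. Then there is no increasing unbounded sequence $\{t_a\}$ with $\lim_{a\to\infty}X(t_a)/t_a=\psi\ne\eta$. Therefore $\lim_{t\to\infty}X(t)/t=\eta$.
   Context: Model: $Q$ queues, finite set $\mathcal{S}=\{S_1,\dots,S_N\}\subset\mathbb{R}^Q_{\ge0}$ of service vectors, discrete time. Arrivals $A(t)$ with $0\le A_q(t)\le\bar A_q<\infty$ and $\rho_q=\lim_{t\to\infty}\frac1t\sum_{s=0}^{t-1}A_q(s)\in(0,\infty)$. Departures $D_q(t)=\min\{S_q(t),X_q(t)\}$, $X(t+1)=X(t)+A(t)-D(t)$, $X(0)=0$, with $S(t)\in\arg\max_{S\in\mathcal{S}}\langle S,\Delta X(t)\rangle$ (MaxWeight). Stability region $\mathcal{P}=\{r\in\mathbb{R}^Q_{\ge0}: r\le\sum_n\alpha_nS_n\text{ for some }\alpha_n\ge0,\sum_n\alpha_n=1\}$. *)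

theory Defs
  imports "HOL-Analysis.Analysis"
begin

definition stability_region :: "(real^'q::finite) set \<Rightarrow> (real^'q) set" where
  "stability_region SS = {r. (\<forall>q. 0 \<le> r $ q) \<and>
     (\<exists>\<alpha>. (\<forall>s\<in>SS. 0 \<le> \<alpha> s) \<and> (\<Sum>s\<in>SS. \<alpha> s) = 1 \<and>
          (\<forall>q. r $ q \<le> (\<Sum>s\<in>SS. \<alpha> s * s $ q)))}"

definition diag_app :: "real^'q::finite \<Rightarrow> real^'q \<Rightarrow> real^'q" where
  "diag_app \<delta> x = (\<chi> q. \<delta> $ q * x $ q)"

end

theory Submission
  imports Defs
begin

(* Let Y(t) = (sum over s < t of \<rho> - D(s)) be the queue driven by the mean arrival rate, so that
   X(t) - Y(t) = o(t), and call g feasible if \<rho> - g is dominated by the service vectors in every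
   nonnegative direction; every limit point of X(t)/t is feasible. Write \<parallel>x\<parallel> for the \<Delta>-norm
   \<langle>x, \<Delta>x\<rangle>^(1/2). For feasible g, MaxWeight bounds the drift:
   \<parallel>Y(t+1)\<parallel>\<^sup>2 \<le> \<parallel>Y(t)\<parallel>\<^sup>2 + 2 \<parallel>g\<parallel> \<parallel>Y(t)\<parallel> + o(t), and this recursion forces
   \<parallel>Y(t)\<parallel> \<le> (\<parallel>g\<parallel> + \<epsilon>) t eventually. So every limit point of X(t)/t minimises the \<Delta>-norm over
   the convex set of feasible points. The \<Delta>-norm being strictly convex, the minimiser is unique, and
   a bounded sequence with a single limit point converges. *)

lemma square_recursion_growth_step:
  fixes w e :: "nat \<Rightarrow> real"
  assumes "0 \<le> c" "0 \<le> K" "0 < \<epsilon>"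
    and rec: "\<And>t. (w (Suc t))\<^sup>2 \<le> (w t)\<^sup>2 + 2 * c * w t + e t"
    and e_small: "eventually (\<lambda>t. e t \<le> \<epsilon> * real t) sequentially"
    and w_le: "eventually (\<lambda>t. w t \<le> K * real t) sequentially"
  shows "eventually (\<lambda>t. w t \<le> sqrt (c * K + \<epsilon>) * real t) sequentially"
proof -
  obtain T0 where T0: "\<And>t. t \<ge> T0 \<Longrightarrow> w t \<le> K * real t \<and> e t \<le> \<epsilon> * real t"
    using eventually_conj[OF w_le e_small] by (auto simp: eventually_sequentially)
  define W where "W = (w T0)\<^sup>2"
  have square_le: "(w T)\<^sup>2 \<le> W + (c * K + \<epsilon> / 2) * (real T)\<^sup>2" if "T \<ge> T0" for T
    using that
  proof (induction T rule: dec_induct)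
    case base
    show ?case using assms(1-3) by (simp add: W_def)
  next
    case (step n)
    have "c * w n \<le> c * (K * real n)" "e n \<le> \<epsilon> * real n"
      using T0[OF step.hyps(1)] \<open>0 \<le> c\<close> by (auto intro: mult_left_mono)
    then have "(w (Suc n))\<^sup>2 \<le> W + (c * K + \<epsilon> / 2) * (real n)\<^sup>2 + (2 * c * K + \<epsilon>) * real n"
      using rec[of n] step.IH by (simp add: algebra_simps)
    also have "\<dots> \<le> W + (c * K + \<epsilon> / 2) * (real (Suc n))\<^sup>2"
      using assms(1-3) by (simp add: power2_eq_square algebra_simps)
    finally show ?case .
  qed
  obtain N :: nat where N: "2 * W / \<epsilon> \<le> real N"
    using real_arch_simple by blast
  have "w T \<le> sqrt (c * K + \<epsilon>) * real T" if T: "T \<ge> max T0 (max N 1)" for T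
  proof -
    have "W \<le> \<epsilon> / 2 * real N"
      using N \<open>0 < \<epsilon>\<close> by (simp add: field_simps)
    also have "\<dots> \<le> \<epsilon> / 2 * (real T)\<^sup>2"
    proof (rule mult_left_mono)
      have "real N \<le> real T" "1 * real T \<le> real T * real T"
        using T by (auto intro: mult_right_mono)
      then show "real N \<le> (real T)\<^sup>2"
        by (simp add: power2_eq_square)
    qed (use \<open>0 < \<epsilon>\<close> in simp)
    finally have "(w T)\<^sup>2 \<le> (c * K + \<epsilon>) * (real T)\<^sup>2"
      using square_le[of T] T by (simp add: algebra_simps)
    then have "w T \<le> sqrt ((c * K + \<epsilon>) * (real T)\<^sup>2)"
      by (rule real_le_rsqrt)
    then show ?thesis
      by (simp add: real_sqrt_mult)
  qed
  then show ?thesis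
    unfolding eventually_sequentially by blast
qed

lemma square_recursion_growth:
  fixes w e :: "nat \<Rightarrow> real"
  assumes w_nonneg: "\<And>t. 0 \<le> w t" and "0 \<le> c" "0 < \<epsilon>"
    and rec: "\<And>t. (w (Suc t))\<^sup>2 \<le> (w t)\<^sup>2 + 2 * c * w t + e t"
    and e_sublinear: "(\<lambda>t. e t / real t) \<longlonglongrightarrow> 0"
    and w_le: "\<And>t. w t \<le> B * real t"
  shows "eventually (\<lambda>t. w t \<le> (c + \<epsilon>) * real t) sequentially"
proof -
  have e_small: "eventually (\<lambda>t. e t \<le> d * real t) sequentially" if "0 < d" for d
  proof -
    have "eventually (\<lambda>t. e t / real t < d \<and> 0 < t) sequentially"
      using order_tendstoD(2)[OF e_sublinear that] eventually_gt_at_top[of 0]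
      by (rule eventually_conj)
    then show ?thesis
      by (rule eventually_mono) (simp add: divide_less_eq less_imp_le)
  qed
  define rates where "rates = {K. eventually (\<lambda>t. w t \<le> K * real t) sequentially}"
  have rate_nonneg: "0 \<le> K" if K: "K \<in> rates" for K
  proof -
    obtain N where "\<And>n. n \<ge> N \<Longrightarrow> w n \<le> K * real n"
      using K by (auto simp: rates_def eventually_sequentially)
    then have "0 \<le> K * real (Suc N)"
      using w_nonneg[of "Suc N"] by (meson le_SucI order_refl order_trans)
    then show ?thesis
      by (simp add: zero_le_mult_iff)
  qed
  have rate_mono: "K' \<in> rates" if "K \<in> rates" "K \<le> K'" for K K'
  proof -
    have "eventually (\<lambda>t. w t \<le> K * real t) sequentially"
      using that(1) by (simp add: rates_def)
    moreover have "K * real t \<le> K' * real t" for t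
      using that(2) by (simp add: mult_right_mono)
    ultimately show ?thesis
      unfolding rates_def by (simp add: eventually_mono order_trans)
  qed
  have "B \<in> rates"
    using w_le by (simp add: rates_def)
  then have rates_ne: "rates \<noteq> {}" and rates_bdd: "bdd_below rates"
    using rate_nonneg by (auto simp: bdd_below_def)
  define L where "L = Inf rates"
  have "0 \<le> L"
    unfolding L_def using rates_ne rate_nonneg by (intro cInf_greatest) auto
  have L_plus: "L + d \<in> rates" if d: "0 < d" for d
  proof -
    obtain K where "K \<in> rates" "K < L + d"
      using cInf_less_iff[OF rates_ne rates_bdd, of "L + d"] d by (auto simp: L_def)
    then show ?thesis
      using rate_mono by auto
  qed
  \<comment> \<open>Feeding the rate \<open>L + d\<close> back into the step lemma improves it to about \<open>sqrt (c L)\<close>.\<close>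
  have square_bound: "L\<^sup>2 \<le> c * L + d * (c + 1)" if "0 < d" for d
  proof -
    have "sqrt (c * (L + d) + d) \<in> rates"
      using square_recursion_growth_step[OF \<open>0 \<le> c\<close> _ that rec e_small[OF that], of "L + d"]
        L_plus[OF that] \<open>0 \<le> L\<close> that by (simp add: rates_def)
    then have "L \<le> sqrt (c * (L + d) + d)"
      unfolding L_def using rates_bdd by (rule cInf_lower)
    then have "L\<^sup>2 \<le> (sqrt (c * (L + d) + d))\<^sup>2"
      using \<open>0 \<le> L\<close> by (rule power_mono)
    then have "L\<^sup>2 \<le> c * (L + d) + d"
      using \<open>0 \<le> L\<close> \<open>0 \<le> c\<close> that by simp
    then show ?thesis
      by (simp add: algebra_simps)
  qed
  have "L\<^sup>2 \<le> c * L"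
  proof (rule field_le_epsilon)
    fix d :: real
    assume "0 < d"
    then show "L\<^sup>2 \<le> c * L + d"
      using square_bound[of "d / (c + 1)"] \<open>0 \<le> c\<close> by simp
  qed
  then have "L \<le> c"
    using \<open>0 \<le> L\<close> \<open>0 \<le> c\<close> by (cases "L = 0") (auto simp: power2_eq_square)
  then show ?thesis
    using rate_mono[OF L_plus[OF \<open>0 < \<epsilon>\<close>]] by (simp add: rates_def)
qed

lemma diag_app_add: "diag_app d (x + y) = diag_app d x + diag_app d y"
  by (simp add: diag_app_def vec_eq_iff algebra_simps)

lemma diag_app_diff: "diag_app d (x - y) = diag_app d x - diag_app d y"
  by (simp add: diag_app_def vec_eq_iff algebra_simps)

lemma diag_app_scaleR: "diag_app d (a *\<^sub>R x) = a *\<^sub>R diag_app d x"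
  by (simp add: diag_app_def vec_eq_iff algebra_simps)

lemma bounded_linear_diag_app: "bounded_linear (diag_app d)"
  unfolding linear_conv_bounded_linear[symmetric]
  by (rule linearI) (simp_all add: diag_app_add diag_app_scaleR)

lemma inner_diag_app_commute: "x \<bullet> diag_app d y = diag_app d x \<bullet> y"
  by (simp add: diag_app_def inner_vec_def mult_ac)

lemma inner_diag_app_sqrt:
  assumes "\<forall>q. 0 \<le> d $ q"
  shows "x \<bullet> diag_app d y = diag_app (\<chi> q. sqrt (d $ q)) x \<bullet> diag_app (\<chi> q. sqrt (d $ q)) y"
proof -
  have "x $ q * (d $ q * y $ q) = sqrt (d $ q) * x $ q * (sqrt (d $ q) * y $ q)" for q
    using assms by (simp add: algebra_simps flip: power2_eq_square)
  then show ?thesis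
    unfolding diag_app_def inner_vec_def by (intro sum.cong) simp_all
qed

lemma diag_app_eq_0_iff:
  assumes "\<forall>q. d $ q \<noteq> 0"
  shows "diag_app d x = 0 \<longleftrightarrow> x = 0"
  using assms by (simp add: diag_app_def vec_eq_iff)

lemma norm_minimizer_unique:
  fixes x y :: "'a::real_inner"
  assumes "convex C" "x \<in> C" "y \<in> C"
    and "\<forall>z\<in>C. norm x \<le> norm z" "\<forall>z\<in>C. norm y \<le> norm z"
  shows "x = y"
proof -
  have "closed_segment x y \<subseteq> C"
    using assms(1-3) by (rule convex_contains_segment[THEN iffD1, rule_format])
  then have "\<forall>z\<in>closed_segment x y. dist 0 x \<le> dist 0 z" "\<forall>z\<in>closed_segment x y. dist 0 y \<le> dist 0 z"
    using assms(4,5) by auto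
  then show ?thesis
    by (rule any_closest_point_unique[OF convex_closed_segment closed_segment
          ends_in_segment(1) ends_in_segment(2)])
qed

lemma tendsto_of_bounded_unique_limit_point:
  fixes f :: "nat \<Rightarrow> 'a::heine_borel"
  assumes "bounded (range f)"
    and limit_point: "\<And>r l. strict_mono r \<Longrightarrow> (f \<circ> r) \<longlonglongrightarrow> l \<Longrightarrow> l = a"
  shows "f \<longlonglongrightarrow> a"
proof (rule ccontr)
  assume "\<not> f \<longlonglongrightarrow> a"
  then obtain \<epsilon> where "0 < \<epsilon>" and "\<not> eventually (\<lambda>n. dist (f n) a < \<epsilon>) sequentially"
    by (auto simp: tendsto_iff)
  then obtain r1 :: "nat \<Rightarrow> nat" where r1: "strict_mono r1" "\<And>n. \<epsilon> \<le> dist (f (r1 n)) a"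
    using not_eventually_sequentiallyD by (metis not_less)
  have "bounded (range (f \<circ> r1))"
    using assms(1) by (rule bounded_subset) auto
  then obtain l r2 where r2: "strict_mono r2" "((f \<circ> r1) \<circ> r2) \<longlonglongrightarrow> l"
    using bounded_imp_convergent_subsequence by blast
  then have "l = a"
    using limit_point[OF strict_mono_o[OF r1(1) r2(1)]] by (simp add: o_assoc)
  then have "(\<lambda>n. dist (f (r1 (r2 n))) a) \<longlonglongrightarrow> 0"
    using r2(2) tendsto_dist[OF _ tendsto_const, of _ l sequentially a] by (simp add: o_def)
  then have "\<epsilon> \<le> 0"
    using r1(2) by (intro tendsto_lowerbound) auto
  with \<open>0 < \<epsilon>\<close> show False
    by simp
qed

text \<open>By duality, \<open>dominated_by SS r\<close> says \<open>r \<le> \<Sum>\<^sub>n \<alpha>\<^sub>n S\<^sub>n\<close> for some probability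
  vector \<open>\<alpha>\<close>: the stability region without the sign constraint on \<open>r\<close>.\<close>
definition dominated_by :: "(real^'q::finite) set \<Rightarrow> real^'q \<Rightarrow> bool" where
  "dominated_by SS r \<longleftrightarrow> (\<forall>w :: real^'q. (\<forall>q. 0 \<le> w $ q) \<longrightarrow> (\<exists>s\<in>SS. w \<bullet> r \<le> w \<bullet> s))"

lemma convex_dominated_by:
  fixes SS :: "(real^'q::finite) set"
  shows "convex {r. dominated_by SS r}"
proof (rule convexI, clarsimp simp: dominated_by_def)
  fix r1 r2 w :: "real^'q" and u v :: real
  assume r1: "\<forall>w. (\<forall>q. 0 \<le> w $ q) \<longrightarrow> (\<exists>s\<in>SS. w \<bullet> r1 \<le> w \<bullet> s)"
    and r2: "\<forall>w. (\<forall>q. 0 \<le> w $ q) \<longrightarrow> (\<exists>s\<in>SS. w \<bullet> r2 \<le> w \<bullet> s)"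
    and uv: "0 \<le> u" "0 \<le> v" "u + v = 1" and w: "\<forall>q. 0 \<le> w $ q"
  obtain s1 s2 where s: "s1 \<in> SS" "w \<bullet> r1 \<le> w \<bullet> s1" "s2 \<in> SS" "w \<bullet> r2 \<le> w \<bullet> s2"
    using r1 r2 w by blast
  define s where "s = (if w \<bullet> s1 \<le> w \<bullet> s2 then s2 else s1)"
  have "w \<bullet> (u *\<^sub>R r1 + v *\<^sub>R r2) = u * (w \<bullet> r1) + v * (w \<bullet> r2)"
    by (simp add: inner_add_right)
  also have "\<dots> \<le> u * (w \<bullet> s) + v * (w \<bullet> s)"
    using s uv by (intro add_mono mult_left_mono) (auto simp: s_def)
  also have "\<dots> = w \<bullet> s"
    using uv by (simp flip: distrib_right)
  finally show "\<exists>s\<in>SS. w \<bullet> (u *\<^sub>R r1 + v *\<^sub>R r2) \<le> w \<bullet> s"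
    using s by (auto simp: s_def)
qed

locale maxweight_queue =
  fixes SS :: "(real^'q::finite) set"
    and \<delta> Abar \<rho> :: "real^'q"
    and A Sch X :: "nat \<Rightarrow> real^'q"
  assumes SS_fin: "finite SS"
    and SS_nonneg: "\<forall>s\<in>SS. \<forall>q. 0 \<le> s $ q"
    and delta_pos: "\<forall>q. 0 < \<delta> $ q"
    and A_bnd: "\<forall>t q. 0 \<le> A t $ q \<and> A t $ q \<le> Abar $ q"
    and rho_lim: "\<forall>q. (\<lambda>t. (\<Sum>s<t. A s $ q) / real t) \<longlonglongrightarrow> \<rho> $ q"
    and X0: "X 0 = 0"
    and X_step: "\<forall>t. X (Suc t) = X t + A t - (\<chi> q. min (Sch t $ q) (X t $ q))"
    and maxweight: "\<forall>t. Sch t \<in> SS \<and>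
                      (\<forall>s\<in>SS. s \<bullet> diag_app \<delta> (X t) \<le> Sch t \<bullet> diag_app \<delta> (X t))"
begin

definition departure :: "nat \<Rightarrow> real^'q" where
  "departure t = (\<chi> q. min (Sch t $ q) (X t $ q))"

lemma queue_Suc: "X (Suc t) = X t + A t - departure t"
  using X_step by (simp add: departure_def)

lemma schedule_in_SS: "Sch t \<in> SS"
  using maxweight by blast

lemma queue_nonneg: "0 \<le> X t $ q"
proof (induction t)
  case (Suc t)
  have "min (Sch t $ q) (X t $ q) \<le> X t $ q" "0 \<le> A t $ q"
    using A_bnd by simp_all
  then show ?case
    by (simp add: queue_Suc departure_def)
qed (simp add: X0)

lemma departure_nonneg: "0 \<le> departure t $ q"
  using queue_nonneg SS_nonneg schedule_in_SS by (simp add: departure_def)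

lemma departure_le_schedule: "departure t $ q \<le> Sch t $ q"
  by (simp add: departure_def)

lemma queue_eq_sum: "X t = (\<Sum>s<t. A s) - (\<Sum>s<t. departure s)"
  by (induction t) (simp_all add: X0 queue_Suc)

lemma arrival_average_tendsto: "(\<lambda>t. inverse (real t) *\<^sub>R (\<Sum>s<t. A s)) \<longlonglongrightarrow> \<rho>"
  using rho_lim by (intro vec_tendstoI) (simp add: divide_inverse mult.commute)

lemma schedule_component_bounded:
  obtains S where "\<And>s q. s \<in> SS \<Longrightarrow> s $ q \<le> S"
proof
  fix s q
  assume "s \<in> SS"
  then have "s $ q \<le> (\<Sum>q\<in>UNIV. s $ q)"
    using SS_nonneg by (intro member_le_sum) auto
  also have "\<dots> \<le> (\<Sum>s\<in>SS. \<Sum>q\<in>UNIV. s $ q)"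
    using \<open>s \<in> SS\<close> SS_nonneg SS_fin by (intro member_le_sum sum_nonneg) auto
  finally show "s $ q \<le> (\<Sum>s\<in>SS. \<Sum>q\<in>UNIV. s $ q)" .
qed

lemma departure_deviation_bounded:
  obtains B where "\<And>t. norm (\<rho> - departure t) \<le> B"
proof -
  obtain S where S: "\<And>s q. s \<in> SS \<Longrightarrow> s $ q \<le> S"
    using schedule_component_bounded by blast
  have "norm (\<rho> - departure t) \<le> norm \<rho> + real CARD('q) * S" for t
  proof -
    have "norm (departure t) \<le> (\<Sum>q\<in>UNIV. \<bar>departure t $ q\<bar>)"
      by (rule norm_le_l1_cart)
    also have "\<dots> \<le> real CARD('q) * S"
    proof (rule sum_bounded_above)
      fix q
      show "\<bar>departure t $ q\<bar> \<le> S"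
        using departure_nonneg[of t q] departure_le_schedule[of t q] S[OF schedule_in_SS[of t], of q]
        by simp
    qed
    finally show ?thesis
      using norm_triangle_ineq4[of \<rho> "departure t"] by simp
  qed
  then show thesis
    using that by blast
qed

text \<open>The schedule exceeds the departures only in queues shorter than the schedule,
  so the service MaxWeight promises but cannot deliver has bounded weight.\<close>
lemma unused_service_bounded:
  obtains C where "\<And>t. X t \<bullet> diag_app \<delta> (Sch t - departure t) \<le> C"
proof -
  obtain S where S: "\<And>s q. s \<in> SS \<Longrightarrow> s $ q \<le> S"
    using schedule_component_bounded by blast
  have "X t $ q * (\<delta> $ q * (Sch t $ q - departure t $ q)) \<le> \<delta> $ q * (S * S)" for t q
  proof (cases "X t $ q \<le> Sch t $ q")
    case True
    then have "X t $ q * (Sch t $ q - departure t $ q) \<le> S * S"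
      using queue_nonneg[of t q] S[OF schedule_in_SS, of t q]
      by (intro mult_mono) (auto simp: departure_def)
    then have "\<delta> $ q * (X t $ q * (Sch t $ q - departure t $ q)) \<le> \<delta> $ q * (S * S)"
      using delta_pos by (simp add: mult_left_mono less_imp_le)
    then show ?thesis
      by (metis mult.left_commute)
  next
    case False
    then show ?thesis
      using delta_pos S[OF schedule_in_SS, of t q] queue_nonneg[of t q]
      by (simp add: departure_def less_imp_le)
  qed
  then have "X t \<bullet> diag_app \<delta> (Sch t - departure t) \<le> (\<Sum>q\<in>UNIV. \<delta> $ q * (S * S))" for t
    unfolding inner_vec_def diag_app_def by (intro sum_mono) simp
  then show thesis
    using that by blast
qed

lemma maxweight_drift:
  assumes "dominated_by SS (\<rho> - g)"
  shows "X t \<bullet> diag_app \<delta> (\<rho> - Sch t) \<le> X t \<bullet> diag_app \<delta> g"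
proof -
  define v where "v = diag_app \<delta> (X t)"
  have "\<forall>q. 0 \<le> v $ q"
    using delta_pos queue_nonneg by (simp add: v_def diag_app_def less_imp_le)
  then obtain s where "s \<in> SS" "v \<bullet> (\<rho> - g) \<le> v \<bullet> s"
    using assms unfolding dominated_by_def by blast
  moreover have "s \<bullet> v \<le> Sch t \<bullet> v"
    using maxweight \<open>s \<in> SS\<close> by (simp add: v_def)
  ultimately have "v \<bullet> (\<rho> - Sch t) \<le> v \<bullet> g"
    by (simp add: inner_diff_right inner_commute)
  then show ?thesis
    by (simp add: v_def inner_diag_app_commute)
qed

lemma limit_point_dominated:
  assumes ta: "filterlim ta at_top sequentially"
    and lim: "(\<lambda>a. inverse (real (ta a)) *\<^sub>R X (ta a)) \<longlonglongrightarrow> \<psi>"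
  shows "dominated_by SS (\<rho> - \<psi>)"
  unfolding dominated_by_def
proof (intro allI impI)
  fix w :: "real^'q"
  assume w: "\<forall>q. 0 \<le> w $ q"
  have "Max ((\<bullet>) w ` SS) \<in> (\<bullet>) w ` SS"
    using SS_fin schedule_in_SS by (intro Max_in) auto
  then obtain s0 where "s0 \<in> SS" and s0_max: "w \<bullet> s0 = Max ((\<bullet>) w ` SS)"
    by auto
  have s0: "s0 \<in> SS" "\<And>s. s \<in> SS \<Longrightarrow> w \<bullet> s \<le> w \<bullet> s0"
    using \<open>s0 \<in> SS\<close> SS_fin by (auto simp: s0_max intro: Max_ge)
  have served: "w \<bullet> departure t \<le> w \<bullet> s0" for t
  proof -
    have "w \<bullet> departure t \<le> w \<bullet> Sch t"
      unfolding inner_vec_def using w departure_le_schedule by (intro sum_mono) (simp add: mult_left_mono)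
    then show ?thesis
      using s0(2)[OF schedule_in_SS[of t]] by linarith
  qed
  have lower: "w \<bullet> (inverse (real T) *\<^sub>R X T) \<ge> w \<bullet> (inverse (real T) *\<^sub>R (\<Sum>s<T. A s)) - w \<bullet> s0"
    if "T > 0" for T
  proof -
    have "(\<Sum>s<T. w \<bullet> departure s) \<le> real T * (w \<bullet> s0)"
      using sum_bounded_above[of "{..<T}" "\<lambda>s. w \<bullet> departure s"] served by simp
    then show ?thesis
      using that by (simp add: queue_eq_sum inner_diff_right inner_sum_right field_simps)
  qed
  have ev: "eventually (\<lambda>a. w \<bullet> (inverse (real (ta a)) *\<^sub>R X (ta a)) \<ge>
      w \<bullet> (inverse (real (ta a)) *\<^sub>R (\<Sum>s<ta a. A s)) - w \<bullet> s0) sequentially"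
    using eventually_compose_filterlim[OF eventually_gt_at_top[of 0] ta] lower
    by (simp add: eventually_mono)
  have lim_A: "(\<lambda>a. w \<bullet> (inverse (real (ta a)) *\<^sub>R (\<Sum>s<ta a. A s)) - w \<bullet> s0) \<longlonglongrightarrow> w \<bullet> \<rho> - w \<bullet> s0"
    using filterlim_compose[OF arrival_average_tendsto ta] by (intro tendsto_intros)
  have lim_X: "(\<lambda>a. w \<bullet> (inverse (real (ta a)) *\<^sub>R X (ta a))) \<longlonglongrightarrow> w \<bullet> \<psi>"
    using lim by (intro tendsto_intros)
  have "w \<bullet> \<rho> - w \<bullet> s0 \<le> w \<bullet> \<psi>"
    using tendsto_le[OF trivial_limit_sequentially lim_X lim_A ev] .
  then show "\<exists>s\<in>SS. w \<bullet> (\<rho> - \<psi>) \<le> w \<bullet> s"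
    using s0(1) by (intro bexI[of _ s0]) (auto simp: inner_diff_right)
qed

definition Delta_half :: "real^'q \<Rightarrow> real^'q" where
  "Delta_half = diag_app (\<chi> q. sqrt (\<delta> $ q))"

lemma inner_diag_app_Delta_half: "x \<bullet> diag_app \<delta> y = Delta_half x \<bullet> Delta_half y"
  unfolding Delta_half_def by (rule inner_diag_app_sqrt) (use delta_pos in \<open>simp add: less_imp_le\<close>)

lemma bounded_linear_Delta_half: "bounded_linear Delta_half"
  by (simp add: Delta_half_def bounded_linear_diag_app)

lemma Delta_half_add: "Delta_half (x + y) = Delta_half x + Delta_half y"
  by (simp add: Delta_half_def diag_app_add)

lemma Delta_half_diff: "Delta_half (x - y) = Delta_half x - Delta_half y"
  by (simp add: Delta_half_def diag_app_diff)

lemma Delta_half_scaleR: "Delta_half (a *\<^sub>R x) = a *\<^sub>R Delta_half x"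
  by (simp add: Delta_half_def diag_app_scaleR)

lemma Delta_half_eq_0_iff: "Delta_half x = 0 \<longleftrightarrow> x = 0"
proof -
  have "\<delta> $ q \<noteq> 0" for q
    using delta_pos[rule_format, of q] by linarith
  then show ?thesis
    unfolding Delta_half_def by (intro diag_app_eq_0_iff) simp
qed

definition fluid_queue :: "nat \<Rightarrow> real^'q" where
  "fluid_queue t = (\<Sum>s<t. \<rho> - departure s)"

definition arrival_excess :: "nat \<Rightarrow> real^'q" where
  "arrival_excess t = (\<Sum>s<t. A s - \<rho>)"

lemma queue_eq_fluid_plus_excess: "X t = fluid_queue t + arrival_excess t"
  by (simp add: queue_eq_sum fluid_queue_def arrival_excess_def sum_subtractf)

lemma arrival_excess_sublinear: "(\<lambda>t. inverse (real t) *\<^sub>R arrival_excess t) \<longlonglongrightarrow> 0"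
proof -
  have excess_eq: "inverse (real t) *\<^sub>R arrival_excess t = inverse (real t) *\<^sub>R (\<Sum>s<t. A s) - \<rho>"
    if "0 < t" for t
    using that by (simp add: arrival_excess_def sum_subtractf scaleR_diff_right sum_constant_scaleR
        del: sum_constant)
  have "eventually (\<lambda>t. inverse (real t) *\<^sub>R (\<Sum>s<t. A s) - \<rho> = inverse (real t) *\<^sub>R arrival_excess t) sequentially"
    using eventually_gt_at_top[of 0] by (rule eventually_mono) (simp add: excess_eq)
  moreover have "(\<lambda>t. inverse (real t) *\<^sub>R (\<Sum>s<t. A s) - \<rho>) \<longlonglongrightarrow> \<rho> - \<rho>"
    using arrival_average_tendsto by (intro tendsto_intros)
  ultimately show ?thesis
    by (simp add: tendsto_cong)
qed

lemma fluid_drift_le: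
  assumes "dominated_by SS (\<rho> - g)"
  obtains K C where "\<And>t. fluid_queue t \<bullet> diag_app \<delta> (\<rho> - departure t) \<le>
      norm (Delta_half g) * norm (Delta_half (fluid_queue t)) + K * norm (arrival_excess t) + C"
proof -
  obtain B where B: "\<And>t. norm (\<rho> - departure t) \<le> B"
    using departure_deviation_bounded by blast
  obtain C where C: "\<And>t. X t \<bullet> diag_app \<delta> (Sch t - departure t) \<le> C"
    using unused_service_bounded by blast
  obtain K where "0 < K" and K: "\<And>x. norm (diag_app \<delta> x) \<le> norm x * K"
    using bounded_linear.pos_bounded[OF bounded_linear_diag_app] by blast
  have "fluid_queue t \<bullet> diag_app \<delta> (\<rho> - departure t) \<le>
      norm (Delta_half g) * norm (Delta_half (fluid_queue t)) + (norm g + B) * K * norm (arrival_excess t) + C"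
    for t
  proof -
    let ?Y = "fluid_queue t" and ?E = "arrival_excess t" and ?r = "\<rho> - departure t"
    have "?Y \<bullet> diag_app \<delta> ?r
        = X t \<bullet> diag_app \<delta> (\<rho> - Sch t) + X t \<bullet> diag_app \<delta> (Sch t - departure t) - ?E \<bullet> diag_app \<delta> ?r"
      by (simp add: queue_eq_fluid_plus_excess diag_app_diff algebra_simps)
    also have "\<dots> \<le> X t \<bullet> diag_app \<delta> g + C - ?E \<bullet> diag_app \<delta> ?r"
      using maxweight_drift[OF assms, of t] C[of t] by linarith
    also have "\<dots> = ?Y \<bullet> diag_app \<delta> g + ?E \<bullet> diag_app \<delta> (g - ?r) + C"
      by (simp add: queue_eq_fluid_plus_excess diag_app_diff diag_app_add algebra_simps)
    also have "\<dots> \<le> norm (Delta_half g) * norm (Delta_half ?Y) + (norm g + B) * K * norm ?E + C"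
    proof -
      have "?Y \<bullet> diag_app \<delta> g \<le> norm (Delta_half ?Y) * norm (Delta_half g)"
        unfolding inner_diag_app_Delta_half by (rule norm_cauchy_schwarz)
      moreover have "?E \<bullet> diag_app \<delta> (g - ?r) \<le> norm ?E * ((norm g + B) * K)"
      proof -
        have "norm (g - ?r) \<le> norm g + B"
          using norm_triangle_ineq4[of g ?r] B[of t] by linarith
        then have "norm (diag_app \<delta> (g - ?r)) \<le> (norm g + B) * K"
          using K[of "g - ?r"] mult_right_mono[OF _ less_imp_le[OF \<open>0 < K\<close>]] by (meson order_trans)
        then have "norm ?E * norm (diag_app \<delta> (g - ?r)) \<le> norm ?E * ((norm g + B) * K)"
          by (rule mult_left_mono) simp
        then show ?thesis
          using norm_cauchy_schwarz[of ?E "diag_app \<delta> (g - ?r)"] by linarith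
      qed
      ultimately show ?thesis
        by (simp add: algebra_simps)
    qed
    finally show ?thesis .
  qed
  then show thesis
    by (rule that)
qed

lemma fluid_queue_Suc: "fluid_queue (Suc t) = fluid_queue t + (\<rho> - departure t)"
  by (simp add: fluid_queue_def)

lemma fluid_norm_square_step:
  assumes "dominated_by SS (\<rho> - g)"
  obtains K C where "\<And>t. (norm (Delta_half (fluid_queue (Suc t))))\<^sup>2 \<le>
      (norm (Delta_half (fluid_queue t)))\<^sup>2 + 2 * norm (Delta_half g) * norm (Delta_half (fluid_queue t))
      + (K * norm (arrival_excess t) + C)"
proof -
  obtain K C where drift: "\<And>t. fluid_queue t \<bullet> diag_app \<delta> (\<rho> - departure t) \<le>
      norm (Delta_half g) * norm (Delta_half (fluid_queue t)) + K * norm (arrival_excess t) + C"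
    using fluid_drift_le[OF assms] by blast
  obtain B where B: "\<And>t. norm (\<rho> - departure t) \<le> B"
    using departure_deviation_bounded by blast
  obtain H where "0 < H" and H: "\<And>x. norm (Delta_half x) \<le> norm x * H"
    using bounded_linear.pos_bounded[OF bounded_linear_Delta_half] by blast
  have "(norm (Delta_half (fluid_queue (Suc t))))\<^sup>2 \<le>
      (norm (Delta_half (fluid_queue t)))\<^sup>2 + 2 * norm (Delta_half g) * norm (Delta_half (fluid_queue t))
      + (2 * K * norm (arrival_excess t) + (2 * C + (B * H)\<^sup>2))" for t
  proof -
    let ?Y = "fluid_queue t" and ?r = "\<rho> - departure t"
    have "(norm (Delta_half (fluid_queue (Suc t))))\<^sup>2
        = (norm (Delta_half ?Y))\<^sup>2 + 2 * (?Y \<bullet> diag_app \<delta> ?r) + (norm (Delta_half ?r))\<^sup>2"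
      unfolding fluid_queue_Suc Delta_half_add power2_norm_eq_inner
        inner_diag_app_Delta_half
      by (simp add: inner_add_left inner_add_right inner_commute)
    moreover have "norm (Delta_half ?r) \<le> B * H"
      using H[of ?r] B[of t] \<open>0 < H\<close> by (meson mult_right_mono less_imp_le order_trans)
    then have "(norm (Delta_half ?r))\<^sup>2 \<le> (B * H)\<^sup>2"
      by (simp add: power_mono)
    ultimately show ?thesis
      using drift[of t] by linarith
  qed
  then show thesis
    by (rule that[of "2 * K"])
qed

lemma fluid_norm_linear_bound:
  obtains B where "\<And>t. norm (Delta_half (fluid_queue t)) \<le> B * real t"
proof -
  obtain B where B: "\<And>t. norm (\<rho> - departure t) \<le> B"
    using departure_deviation_bounded by blast
  obtain H where "0 < H" and H: "\<And>x. norm (Delta_half x) \<le> norm x * H"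
    using bounded_linear.pos_bounded[OF bounded_linear_Delta_half] by blast
  have "norm (Delta_half (fluid_queue t)) \<le> (B * H) * real t" for t
  proof -
    have "norm (fluid_queue t) \<le> (\<Sum>s<t. norm (\<rho> - departure s))"
      unfolding fluid_queue_def by (rule norm_sum)
    also have "\<dots> \<le> real t * B"
      using sum_bounded_above[of "{..<t}" "\<lambda>s. norm (\<rho> - departure s)" B] B by simp
    finally have "norm (fluid_queue t) * H \<le> real t * B * H"
      using \<open>0 < H\<close> by (simp add: mult_right_mono)
    then show ?thesis
      using H[of "fluid_queue t"] by (simp add: ac_simps)
  qed
  then show thesis
    by (rule that)
qed

lemma fluid_norm_growth:
  assumes "dominated_by SS (\<rho> - g)" "0 < \<epsilon>"
  shows "eventually (\<lambda>t. norm (Delta_half (fluid_queue t)) \<le> (norm (Delta_half g) + \<epsilon>) * real t) sequentially"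
proof -
  obtain K C where step: "\<And>t. (norm (Delta_half (fluid_queue (Suc t))))\<^sup>2 \<le>
      (norm (Delta_half (fluid_queue t)))\<^sup>2 + 2 * norm (Delta_half g) * norm (Delta_half (fluid_queue t))
      + (K * norm (arrival_excess t) + C)"
    using fluid_norm_square_step[OF assms(1)] by blast
  obtain B where B: "\<And>t. norm (Delta_half (fluid_queue t)) \<le> B * real t"
    using fluid_norm_linear_bound by blast
  have "(\<lambda>t. norm (inverse (real t) *\<^sub>R arrival_excess t)) \<longlonglongrightarrow> 0"
    by (rule tendsto_norm_zero[OF arrival_excess_sublinear])
  then have "(\<lambda>t. K * norm (inverse (real t) *\<^sub>R arrival_excess t) + C * inverse (real t)) \<longlonglongrightarrow> K * 0 + C * 0"
    by (intro tendsto_intros lim_inverse_n)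
  then have "(\<lambda>t. (K * norm (arrival_excess t) + C) / real t) \<longlonglongrightarrow> 0"
    by (simp add: divide_inverse algebra_simps)
  then show ?thesis
    by (rule square_recursion_growth[OF norm_ge_zero norm_ge_zero assms(2) step _ B])
qed

lemma limit_point_norm_le:
  assumes ta: "filterlim ta at_top sequentially"
    and lim: "(\<lambda>a. inverse (real (ta a)) *\<^sub>R X (ta a)) \<longlonglongrightarrow> \<psi>"
    and "dominated_by SS (\<rho> - g)"
  shows "norm (Delta_half \<psi>) \<le> norm (Delta_half g)"
proof (rule field_le_epsilon)
  fix \<epsilon> :: real
  assume "0 < \<epsilon>"
  let ?y = "\<lambda>a. inverse (real (ta a)) *\<^sub>R fluid_queue (ta a)"
  have "(\<lambda>a. inverse (real (ta a)) *\<^sub>R X (ta a) - inverse (real (ta a)) *\<^sub>R arrival_excess (ta a)) \<longlonglongrightarrow> \<psi> - 0"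
    using lim filterlim_compose[OF arrival_excess_sublinear ta] by (rule tendsto_diff)
  then have "?y \<longlonglongrightarrow> \<psi>"
    by (simp add: queue_eq_fluid_plus_excess scaleR_add_right)
  then have "(\<lambda>a. norm (Delta_half (?y a))) \<longlonglongrightarrow> norm (Delta_half \<psi>)"
    by (intro tendsto_norm bounded_linear.tendsto[OF bounded_linear_Delta_half])
  moreover have "eventually (\<lambda>a. norm (Delta_half (?y a)) \<le> norm (Delta_half g) + \<epsilon>) sequentially"
  proof -
    have "eventually (\<lambda>t. norm (Delta_half (fluid_queue t)) \<le> (norm (Delta_half g) + \<epsilon>) * real t \<and> 0 < t)
        sequentially"
      using fluid_norm_growth[OF assms(3) \<open>0 < \<epsilon>\<close>] eventually_gt_at_top by (rule eventually_conj)
    then have "eventually (\<lambda>a. norm (Delta_half (fluid_queue (ta a))) \<le> (norm (Delta_half g) + \<epsilon>) * real (ta a)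
        \<and> 0 < ta a) sequentially"
      by (rule eventually_compose_filterlim[OF _ ta])
    then show ?thesis
      by (rule eventually_mono) (simp add: Delta_half_scaleR field_simps)
  qed
  ultimately show "norm (Delta_half \<psi>) \<le> norm (Delta_half g) + \<epsilon>"
    by (rule tendsto_upperbound) simp
qed

lemma limit_points_eq:
  assumes "filterlim ta at_top sequentially" "(\<lambda>a. inverse (real (ta a)) *\<^sub>R X (ta a)) \<longlonglongrightarrow> \<psi>"
    and "filterlim tb at_top sequentially" "(\<lambda>a. inverse (real (tb a)) *\<^sub>R X (tb a)) \<longlonglongrightarrow> \<phi>"
  shows "\<psi> = \<phi>"
proof -
  let ?G = "{g. dominated_by SS (\<rho> - g)}"
  have "?G = (+) \<rho> ` (uminus ` {r. dominated_by SS r})"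
  proof (intro equalityI subsetI)
    fix g
    assume "g \<in> ?G"
    then show "g \<in> (+) \<rho> ` (uminus ` {r. dominated_by SS r})"
      by (intro image_eqI[of _ _ "- (\<rho> - g)"] imageI) auto
  qed auto
  moreover have "convex ((+) \<rho> ` (uminus ` {r. dominated_by SS r}))"
    by (intro convex_translation convex_negations convex_dominated_by)
  ultimately have "convex (Delta_half ` ?G)"
    by (simp add: convex_linear_image bounded_linear.linear[OF bounded_linear_Delta_half])
  moreover have "Delta_half \<psi> \<in> Delta_half ` ?G" "Delta_half \<phi> \<in> Delta_half ` ?G"
    using limit_point_dominated assms by auto
  moreover have "\<forall>z\<in>Delta_half ` ?G. norm (Delta_half \<psi>) \<le> norm z"
    "\<forall>z\<in>Delta_half ` ?G. norm (Delta_half \<phi>) \<le> norm z"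
    using limit_point_norm_le assms by auto
  ultimately have "Delta_half \<psi> = Delta_half \<phi>"
    by (rule norm_minimizer_unique)
  then have "Delta_half (\<psi> - \<phi>) = 0"
    by (simp add: Delta_half_diff)
  then show ?thesis
    by (simp add: Delta_half_eq_0_iff)
qed

lemma bounded_queue_average: "bounded (range (\<lambda>t. inverse (real t) *\<^sub>R X t))"
proof -
  have "X t $ q \<le> real t * Abar $ q" for t q
  proof -
    have "X t $ q \<le> (\<Sum>s<t. A s $ q)"
      using departure_nonneg by (simp add: queue_eq_sum sum_nonneg)
    also have "\<dots> \<le> real t * Abar $ q"
      using sum_bounded_above[of "{..<t}" "\<lambda>s. A s $ q" "Abar $ q"] A_bnd by simp
    finally show ?thesis .
  qed
  then have "norm (X t) \<le> real t * (\<Sum>q\<in>UNIV. Abar $ q)" for t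
    using norm_le_l1_cart[of "X t"] queue_nonneg sum_mono[of UNIV "\<lambda>q. \<bar>X t $ q\<bar>" "\<lambda>q. real t * Abar $ q"]
    by (simp add: sum_distrib_left)
  moreover have "0 \<le> (\<Sum>q\<in>UNIV. Abar $ q)"
    using A_bnd by (meson order_trans sum_nonneg)
  ultimately have "norm (inverse (real t) *\<^sub>R X t) \<le> (\<Sum>q\<in>UNIV. Abar $ q)" for t
    by (cases "t = 0") (auto simp: X0 field_simps)
  then show ?thesis
    unfolding bounded_iff by blast
qed

end

theorem proposition1:
  fixes SS :: "(real^'q::finite) set"
    and \<delta> :: "real^'q" and Abar \<rho> \<eta> :: "real^'q"
    and A Sch X :: "nat \<Rightarrow> real^'q"
    and tc :: "nat \<Rightarrow> nat"
  assumes SS_fin: "finite SS" and SS_ne: "SS \<noteq> {}"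
    and SS_nonneg: "\<forall>s\<in>SS. \<forall>q. 0 \<le> s $ q"
    and delta_pos: "\<forall>q. 0 < \<delta> $ q"
    and A_bnd: "\<forall>t q. 0 \<le> A t $ q \<and> A t $ q \<le> Abar $ q"
    and rho_lim: "\<forall>q. (\<lambda>t. (\<Sum>s<t. A s $ q) / real t) \<longlonglongrightarrow> \<rho> $ q"
    and rho_pos: "\<forall>q. 0 < \<rho> $ q"
    and X0: "X 0 = 0"
    and X_step: "\<forall>t. X (Suc t) = X t + A t - (\<chi> q. min (Sch t $ q) (X t $ q))"
    and maxweight: "\<forall>t. Sch t \<in> SS \<and>
                      (\<forall>s\<in>SS. s \<bullet> diag_app \<delta> (X t) \<le> Sch t \<bullet> diag_app \<delta> (X t))"
    and overload: "\<rho> \<notin> stability_region SS"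
    and tc_mono: "mono tc" and tc_unbdd: "filterlim tc at_top sequentially"
    and tc_lim: "(\<lambda>c. inverse (real (tc c)) *\<^sub>R X (tc c)) \<longlonglongrightarrow> \<eta>"
    and eta_H: "ereal (\<eta> \<bullet> diag_app \<delta> \<eta>) =
       limsup (\<lambda>t. ereal ((inverse (real t) *\<^sub>R X t) \<bullet> diag_app \<delta> (inverse (real t) *\<^sub>R X t)))"
  shows "(\<forall>(ta :: nat \<Rightarrow> nat) \<psi>. mono ta \<and> filterlim ta at_top sequentially \<and>
            (\<lambda>a. inverse (real (ta a)) *\<^sub>R X (ta a)) \<longlonglongrightarrow> \<psi> \<longrightarrow> \<psi> = \<eta>)
         \<and> (\<lambda>t. inverse (real t) *\<^sub>R X t) \<longlonglongrightarrow> \<eta>"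
proof -
  interpret maxweight_queue SS \<delta> Abar \<rho> A Sch X
    by unfold_locales (fact SS_fin SS_nonneg delta_pos A_bnd rho_lim X0 X_step maxweight)+
  have limit_is_eta: "\<psi> = \<eta>"
    if "filterlim ta at_top sequentially" "(\<lambda>a. inverse (real (ta a)) *\<^sub>R X (ta a)) \<longlonglongrightarrow> \<psi>"
    for ta :: "nat \<Rightarrow> nat" and \<psi>
    using limit_points_eq[OF that tc_unbdd tc_lim] .
  have "(\<lambda>t. inverse (real t) *\<^sub>R X t) \<longlonglongrightarrow> \<eta>"
  proof (rule tendsto_of_bounded_unique_limit_point[OF bounded_queue_average])
    fix r :: "nat \<Rightarrow> nat" and l
    assume "strict_mono r" "((\<lambda>t. inverse (real t) *\<^sub>R X t) \<circ> r) \<longlonglongrightarrow> l"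
    then show "l = \<eta>"
      using limit_is_eta[OF filterlim_subseq] by (simp add: o_def)
  qed
  with limit_is_eta show ?thesis
    by blast
qed

end
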